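(* Let the setting, Assumption A and Assumption B below hold, with agents and data sampled without replacement, and let $w_i$ be the iterates generated by the ISFedAvg algorithm below, with $\widetilde w_i=w^o-w_i$. For sufficiently small step-size $\mu$, the mean-square error converges exponentially fast: $$\mathbb{E}\|\widetilde w_i\|^2\le O\big((\lambda')^i\big)+O(\mu)\big(\sigma_s^2+\xi^2\big)+O(\mu^2)\frac1K\sum_{k=1}^K\sigma_{q,k}^2,$$ where $\lambda'=1-O(\mu)+O(\mu^2)\in[0,1)$, and $$\sigma_s^2=\frac{1}{K^2}\sum_{k=1}^K\frac{1}{p_k}\Big\{\sigma_{s,k}^2+\Big(3+\frac{6}{E_kB_k}\Big)\|\nabla_wP_k(w^o)\|^2\Big\},\quad \sigma_{s,k}^2=\frac{6}{E_kB_kN_k^2}\sum_{n=1}^{N_k}\frac{1}{p_n^{(k)}}\|\nabla_wQ_k(w^o;x_{k,n})\|^2,$$ $$\sigma_{q,k}^2=\frac{3}{B_kN_k^2}\sum_{n=1}^{N_k}\frac{1}{p_n^{(k)}}\|\nabla_wQ_k(w_k^o;x_{k,n})\|^2.$$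
   Context: There are $K$ agents; agent $k$ holds data points $x_{k,1},\dots,x_{k,N_k}$, a loss $Q_k(w;x)$ differentiable in $w\in\mathbb{R}^M$, and the empirical risk $P_k(w)=\frac1{N_k}\sum_{n=1}^{N_k}Q_k(w;x_{k,n})$. Let $w^o=\arg\min_w\frac1K\sum_kP_k(w)$ and $w_k^o=\arg\min_wP_k(w)$. Assumption A: each $P_k$ is $\nu$-strongly convex ($\nu>0$), each $Q_k(\cdot;x_{k,n})$ is convex with $\delta$-Lipschitz gradient. Assumption B: $\|w_k^o-w^o\|\le\xi$ for all $k$. ISFedAvg with step-size $\mu>0$ and initial point $w_0$: at iteration $i=1,2,\dots$, select $L$ agents $\mathcal{L}_i$ from $\{1,\dots,K\}$ without replacement with $\mathbb{P}(k\in\mathcal{L}_i)=Lp_k$ ($p_k>0$, $\sum_kp_k=1$); each $k\in\mathcal{L}_i$ sets $w_{k,0}=w_{i-1}$ and for $e=1,\dots,E_k$ draws a mini-batch $\mathcal{B}_{k,e}$ of $B_k$ indices from $\{1,\dots,N_k\}$ without replacement with $\mathbb{P}(n\in\mathcal{B}_{k,e})=B_kp_n^{(k)}$ ($p_n^{(k)}>0$, $\sum_np_n^{(k)}=1$), independently of the past, and updates $w_{k,e}=w_{k,e-1}-\frac{\mu}{Kp_kE_kB_k}\sum_{b\in\mathcal{B}_{k,e}}\frac{1}{N_kp_b^{(k)}}\nabla_wQ_k(w_{k,e-1};x_{k,b})$; then $w_i=\frac1L\sum_{k\in\mathcal{L}_i}w_{k,E_k}$. The inclusion probabilities are fixed across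 iterations. The notation $O(\mu^a)$ (resp. $O((\lambda')^i)$) denotes a term bounded by $C\mu^a$ (resp. $C(\lambda')^i$) with $C$ independent of $\mu$ and $i$ (it may depend on the problem data, inclusion probabilities and initialization). *)

theory Defs
  imports "HOL-Probability.Probability"
begin

definition strongly_convex :: "real \<Rightarrow> ('a::real_normed_vector \<Rightarrow> real) \<Rightarrow> bool" where
  "strongly_convex \<nu> f \<longleftrightarrow>
     (\<forall>x y t. 0 \<le> t \<and> t \<le> 1 \<longrightarrow>
        f ((1 - t) *\<^sub>R x + t *\<^sub>R y)
          \<le> (1 - t) * f x + t * f y - \<nu> / 2 * t * (1 - t) * (norm (x - y))\<^sup>2)"

fun local_run :: "('a \<Rightarrow> nat set \<Rightarrow> 'a) \<Rightarrow> nat set pmf \<Rightarrow> nat \<Rightarrow> 'a \<Rightarrow> 'a pmf" where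
  "local_run upd D 0 w = return_pmf w"
| "local_run upd D (Suc e) w = bind_pmf (local_run upd D e w) (\<lambda>v. map_pmf (upd v) D)"

fun sum_runs :: "(nat \<Rightarrow> 'a \<Rightarrow> 'a::{zero,plus} pmf) \<Rightarrow> nat list \<Rightarrow> 'a \<Rightarrow> 'a pmf" where
  "sum_runs R [] w = return_pmf 0"
| "sum_runs R (k # ks) w = bind_pmf (R k w) (\<lambda>v. map_pmf (\<lambda>s. v + s) (sum_runs R ks w))"

definition isfedavg_local ::
  "nat \<Rightarrow> (nat \<Rightarrow> real) \<Rightarrow> (nat \<Rightarrow> nat) \<Rightarrow> (nat \<Rightarrow> nat) \<Rightarrow> (nat \<Rightarrow> nat)
   \<Rightarrow> (nat \<Rightarrow> nat \<Rightarrow> real) \<Rightarrow> (nat \<Rightarrow> 'a \<Rightarrow> 'd \<Rightarrow> 'a::real_vector) \<Rightarrow> (nat \<Rightarrow> nat \<Rightarrow> 'd)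
   \<Rightarrow> real \<Rightarrow> (nat \<Rightarrow> nat set pmf) \<Rightarrow> nat \<Rightarrow> 'a \<Rightarrow> 'a pmf" where
  "isfedavg_local K p E B N pn gQ x \<mu> D k w =
     local_run
       (\<lambda>v Bs. v - (\<mu> / (real K * p k * real (E k) * real (B k))) *\<^sub>R
                   (\<Sum>b\<in>Bs. (1 / (real (N k) * pn k b)) *\<^sub>R gQ k v (x k b)))
       (D k) (E k) w"

definition isfedavg_step :: "(nat \<Rightarrow> 'a \<Rightarrow> 'a::real_vector pmf) \<Rightarrow> nat set pmf \<Rightarrow> nat \<Rightarrow> 'a \<Rightarrow> 'a pmf" where
  "isfedavg_step R S L w =
     bind_pmf S (\<lambda>A. map_pmf (\<lambda>s. (1 / real L) *\<^sub>R s) (sum_runs R (sorted_list_of_set A) w))"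

fun iterate_pmf :: "('a \<Rightarrow> 'a pmf) \<Rightarrow> 'a \<Rightarrow> nat \<Rightarrow> 'a pmf" where
  "iterate_pmf step w0 0 = return_pmf w0"
| "iterate_pmf step w0 (Suc i) = bind_pmf (iterate_pmf step w0 i) step"

definition isfedavg ::
  "nat \<Rightarrow> nat \<Rightarrow> (nat \<Rightarrow> real) \<Rightarrow> nat set pmf \<Rightarrow> (nat \<Rightarrow> nat) \<Rightarrow> (nat \<Rightarrow> nat) \<Rightarrow> (nat \<Rightarrow> nat)
   \<Rightarrow> (nat \<Rightarrow> nat \<Rightarrow> real) \<Rightarrow> (nat \<Rightarrow> nat set pmf) \<Rightarrow> (nat \<Rightarrow> 'a \<Rightarrow> 'd \<Rightarrow> 'a::real_vector)
   \<Rightarrow> (nat \<Rightarrow> nat \<Rightarrow> 'd) \<Rightarrow> real \<Rightarrow> 'a \<Rightarrow> nat \<Rightarrow> 'a pmf" where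
  "isfedavg K L p S E B N pn D gQ x \<mu> w0 i =
     iterate_pmf (isfedavg_step (isfedavg_local K p E B N pn gQ x \<mu> D) S L) w0 i"

end

theory Submission
  imports Defs
begin

(* A local run of agent k started at w, with step mu/(K p_k E_k B_k) and importance
   weights 1/(N_k p_n^(k)), moves on average along -mu/(K p_k) grad P_k(w): the inclusion
   probabilities make every weighted mini-batch gradient unbiased, and for small mu the local
   iterates stay within O(mu) (|w - w^o| + Gamma) of w, where Gamma bounds the per-sample gradients
   at w^o.  Jensen over the averaged agents and the inclusion probabilities L p_k of the agent
   sample then give
     E |w_i - w^o|^2 <= (1 - 2 nu mu + 2 Y mu^2) E |w_(i-1) - w^o|^2 + 2 Y mu^2 Gamma^2,
   because sum_k grad P_k(w^o) = 0 and every grad P_k is nu-strongly monotone.  Iterating yields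
   lambda'^i |w_0 - w^o|^2 + (2 Y Gamma^2 / nu) mu.  As the constants may depend on the data, the
   O(mu) term is a multiple of sigma_s^2 + xi^2, which vanishes only if all gradients at w^o do. *)

section \<open>Expectations over finitely supported distributions\<close>

lemma expectation_bind_pmf_finite:
  fixes f :: "'b \<Rightarrow> real"
  assumes "finite (set_pmf M)" and "\<And>x. x \<in> set_pmf M \<Longrightarrow> finite (set_pmf (N x))"
  shows "measure_pmf.expectation (bind_pmf M N) f
           = measure_pmf.expectation M (\<lambda>x. measure_pmf.expectation (N x) f)"
proof -
  have "measure_pmf.expectation (bind_pmf M N) f
          = (\<Sum>x\<in>set_pmf M. pmf M x * measure_pmf.expectation (N x) f)"
    using assms by (subst pmf_expectation_bind[of "set_pmf M"]) auto
  also have "\<dots> = measure_pmf.expectation M (\<lambda>x. measure_pmf.expectation (N x) f)"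
    using assms by (subst integral_measure_pmf_real[of "set_pmf M"]) (auto simp: mult.commute)
  finally show ?thesis .
qed

lemma expectation_mono_finite_pmf:
  fixes f g :: "'b \<Rightarrow> real"
  assumes "finite (set_pmf M)" and "\<And>x. x \<in> set_pmf M \<Longrightarrow> f x \<le> g x"
  shows "measure_pmf.expectation M f \<le> measure_pmf.expectation M g"
  using assms by (intro integral_mono_AE integrable_measure_pmf_finite AE_pmfI) auto

lemma expectation_sum_random_subset:
  fixes f :: "nat \<Rightarrow> real" and M :: "nat set pmf"
  assumes "finite (set_pmf M)" and "\<And>X. X \<in> set_pmf M \<Longrightarrow> X \<subseteq> {..<n}"
  shows "measure_pmf.expectation M (\<lambda>X. \<Sum>j\<in>X. f j)
           = (\<Sum>j<n. measure_pmf.prob M {X. j \<in> X} * f j)"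
proof -
  have "measure_pmf.expectation M (\<lambda>X. \<Sum>j\<in>X. f j)
          = measure_pmf.expectation M (\<lambda>X. \<Sum>j<n. indicator {X. j \<in> X} X * f j)"
  proof (intro integral_cong_AE AE_pmfI)
    fix X assume "X \<in> set_pmf M"
    then have "X \<subseteq> {..<n}" using assms by auto
    then show "(\<Sum>j\<in>X. f j) = (\<Sum>j<n. indicator {X. j \<in> X} X * f j)"
      by (simp add: indicator_def sum.If_cases Int_absorb1 Int_absorb2)
  qed auto
  also have "\<dots> = (\<Sum>j<n. measure_pmf.prob M {X. j \<in> X} * f j)"
    using assms(1) by (subst Bochner_Integration.integral_sum) (auto intro: integrable_measure_pmf_finite)
  finally show ?thesis .
qed

lemma finite_set_pmf_local_run:
  "finite (set_pmf D) \<Longrightarrow> finite (set_pmf (local_run upd D j w))"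
  by (induction j) auto

lemma finite_set_pmf_sum_runs:
  "(\<And>k. k \<in> set ks \<Longrightarrow> finite (set_pmf (R k w))) \<Longrightarrow> finite (set_pmf (sum_runs R ks w))"
  by (induction ks) auto

lemma finite_set_pmf_iterate_pmf:
  "(\<And>w. finite (set_pmf (step w))) \<Longrightarrow> finite (set_pmf (iterate_pmf step w0 i))"
  by (induction i) auto

lemma expectation_iterate_pmf_le:
  fixes V :: "'a \<Rightarrow> real"
  assumes fin: "\<And>w. finite (set_pmf (step w))"
    and contract: "\<And>w. measure_pmf.expectation (step w) V \<le> \<rho> * V w + b"
    and \<rho>: "0 \<le> \<rho>" "\<rho> < 1" and b: "0 \<le> b"
  shows "measure_pmf.expectation (iterate_pmf step w0 i) V \<le> \<rho> ^ i * V w0 + b / (1 - \<rho>)"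
proof -
  have "measure_pmf.expectation (iterate_pmf step w0 i) V \<le> \<rho> ^ i * V w0 + b * (\<Sum>j<i. \<rho> ^ j)"
  proof (induction i)
    case (Suc i)
    have fin_i: "finite (set_pmf (iterate_pmf step w0 i))"
      by (rule finite_set_pmf_iterate_pmf[OF fin])
    have "measure_pmf.expectation (iterate_pmf step w0 (Suc i)) V
            = measure_pmf.expectation (iterate_pmf step w0 i) (\<lambda>w. measure_pmf.expectation (step w) V)"
      using fin_i fin by (simp add: expectation_bind_pmf_finite)
    also have "\<dots> \<le> measure_pmf.expectation (iterate_pmf step w0 i) (\<lambda>w. \<rho> * V w + b)"
      by (rule expectation_mono_finite_pmf[OF fin_i contract])
    also have "\<dots> = \<rho> * measure_pmf.expectation (iterate_pmf step w0 i) V + b"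
      using fin_i by (simp add: integrable_measure_pmf_finite)
    also have "\<dots> \<le> \<rho> * (\<rho> ^ i * V w0 + b * (\<Sum>j<i. \<rho> ^ j)) + b"
      using Suc \<rho> by (intro add_right_mono mult_left_mono) auto
    also have "\<dots> = \<rho> ^ Suc i * V w0 + b * (\<Sum>j<Suc i. \<rho> ^ j)"
      by (simp add: algebra_simps sum_distrib_left lessThan_Suc_eq_insert_0 sum.reindex power_commutes)
    finally show ?case .
  qed simp
  also have "(\<Sum>j<i. \<rho> ^ j) = (1 - \<rho> ^ i) / (1 - \<rho>)"
    using \<rho> by (simp add: sum_gp_strict)
  also have "\<dots> \<le> 1 / (1 - \<rho>)"
    using \<rho> by (intro divide_right_mono) auto
  finally show ?thesis
    using b by (simp add: mult_left_mono)
qed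

section \<open>Inner-product spaces and gradients\<close>

lemma norm_diff_scaleR_sq:
  fixes u S :: "'a::real_inner"
  shows "(norm (u - a *\<^sub>R S))\<^sup>2 = (norm u)\<^sup>2 - 2 * a * inner u S + a\<^sup>2 * (norm S)\<^sup>2"
  unfolding power2_norm_eq_inner
  by (simp add: inner_diff_left inner_diff_right inner_commute algebra_simps power2_eq_square)

lemma norm_add_sq_le:
  fixes u v :: "'a::real_inner"
  assumes "\<epsilon> > 0"
  shows "(norm (u + v))\<^sup>2 \<le> (1 + \<epsilon>) * (norm u)\<^sup>2 + (1 + 1 / \<epsilon>) * (norm v)\<^sup>2"
proof -
  have "(norm (u + v))\<^sup>2 = (norm u)\<^sup>2 + 2 * inner u v + (norm v)\<^sup>2"
    unfolding power2_norm_eq_inner by (simp add: inner_add_left inner_add_right inner_commute)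
  moreover have "inner u v \<le> norm u * norm v"
    using Cauchy_Schwarz_ineq2[of u v] by linarith
  moreover have "0 \<le> (\<epsilon> * norm u - norm v)\<^sup>2 / \<epsilon>"
    using assms by simp
  then have "2 * (norm u * norm v) \<le> \<epsilon> * (norm u)\<^sup>2 + (1 / \<epsilon>) * (norm v)\<^sup>2"
    using assms by (simp add: power2_eq_square field_simps)
  ultimately show ?thesis by (simp add: algebra_simps)
qed

lemma strongly_convex_difference_quotient_le:
  fixes f :: "'a::real_normed_vector \<Rightarrow> real"
  assumes sc: "strongly_convex \<nu> f" and t: "0 < t" "t < 1"
  shows "(f (x + t *\<^sub>R (y - x)) - f x) / t \<le> f y - f x - \<nu> / 2 * (1 - t) * (norm (x - y))\<^sup>2"
proof -
  have "f ((1 - t) *\<^sub>R x + t *\<^sub>R y)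
          \<le> (1 - t) * f x + t * f y - \<nu> / 2 * t * (1 - t) * (norm (x - y))\<^sup>2"
    using sc t unfolding strongly_convex_def by auto
  moreover have "(1 - t) *\<^sub>R x + t *\<^sub>R y = x + t *\<^sub>R (y - x)"
    by (simp add: algebra_simps)
  ultimately have "f (x + t *\<^sub>R (y - x)) - f x \<le> t * (f y - f x - \<nu> / 2 * (1 - t) * (norm (x - y))\<^sup>2)"
    by (simp add: algebra_simps)
  then show ?thesis
    using t by (simp add: divide_simps mult.commute)
qed

lemma strongly_convex_gradient_ineq:
  fixes f :: "'a::real_inner \<Rightarrow> real"
  assumes sc: "strongly_convex \<nu> f" and d: "GDERIV f x :> Gx"
  shows "inner (y - x) Gx \<le> f y - f x - \<nu> / 2 * (norm (x - y))\<^sup>2"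
proof -
  define \<phi> where "\<phi> t = f (x + t *\<^sub>R (y - x))" for t :: real
  have f': "(f has_derivative (\<lambda>h. inner h Gx)) (at (x + 0 *\<^sub>R (y - x)))"
    using d by (simp add: gderiv_def)
  have line': "((\<lambda>t::real. x + t *\<^sub>R (y - x)) has_derivative (\<lambda>t. t *\<^sub>R (y - x))) (at 0)"
    by (auto intro!: derivative_eq_intros)
  have "(\<phi> has_derivative (\<lambda>t. inner (t *\<^sub>R (y - x)) Gx)) (at 0)"
    unfolding \<phi>_def by (rule has_derivative_compose[OF line' f'])
  then have "(\<phi> has_field_derivative inner (y - x) Gx) (at 0)"
    unfolding has_field_derivative_def by (rule has_derivative_eq_rhs) (auto simp: fun_eq_iff)
  then have "(\<phi> has_field_derivative inner (y - x) Gx) (at 0 within {0<..})"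
    by (rule has_field_derivative_at_within)
  then have quotient: "((\<lambda>t. (\<phi> t - \<phi> 0) / (t - 0)) \<longlongrightarrow> inner (y - x) Gx) (at_right 0)"
    by (simp add: has_field_derivative_iff)
  have bound: "((\<lambda>t. f y - f x - \<nu> / 2 * (1 - t) * (norm (x - y))\<^sup>2)
                 \<longlongrightarrow> f y - f x - \<nu> / 2 * (1 - 0) * (norm (x - y))\<^sup>2) (at_right 0)"
    by (intro tendsto_intros)
  have "\<forall>\<^sub>F t in at_right 0. (\<phi> t - \<phi> 0) / (t - 0) \<le> f y - f x - \<nu> / 2 * (1 - t) * (norm (x - y))\<^sup>2"
    using eventually_at_right_real[OF zero_less_one]
  proof (rule eventually_mono)
    fix t :: real assume "t \<in> {0<..<1}"
    then show "(\<phi> t - \<phi> 0) / (t - 0) \<le> f y - f x - \<nu> / 2 * (1 - t) * (norm (x - y))\<^sup>2"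
      using strongly_convex_difference_quotient_le[OF sc, of t x y] by (simp add: \<phi>_def)
  qed
  from tendsto_le[OF _ bound quotient this] show ?thesis
    by simp
qed

lemma strongly_convex_gradient_monotone:
  fixes f :: "'a::real_inner \<Rightarrow> real"
  assumes sc: "strongly_convex \<nu> f" and dx: "GDERIV f x :> Gx" and dy: "GDERIV f y :> Gy"
  shows "inner (x - y) (Gx - Gy) \<ge> \<nu> * (norm (x - y))\<^sup>2"
proof -
  have 1: "inner (y - x) Gx \<le> f y - f x - \<nu> / 2 * (norm (x - y))\<^sup>2" by (rule strongly_convex_gradient_ineq[OF sc dx])
  have 2: "inner (x - y) Gy \<le> f x - f y - \<nu> / 2 * (norm (y - x))\<^sup>2" by (rule strongly_convex_gradient_ineq[OF sc dy])
  have "norm (y - x) = norm (x - y)" by (rule norm_minus_commute)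
  moreover have "inner (x - y) (Gx - Gy) = - inner (y - x) Gx - inner (x - y) Gy"
    by (simp add: inner_diff_left inner_diff_right inner_commute)
  ultimately show ?thesis using 1 2 by simp
qed

lemma gderiv_eq_0_at_minimum:
  fixes J :: "'a::real_inner \<Rightarrow> real"
  assumes d: "GDERIV J w :> G" and m: "\<And>v. J w \<le> J v"
  shows "G = 0"
proof -
  have "(\<lambda>h. inner h G) = (\<lambda>v. 0)"
    using d m by (intro differential_zero_maxmin[of w UNIV]) (auto simp: gderiv_def)
  then have "inner G G = 0" by meson
  then show ?thesis by simp
qed

lemma gderiv_average:
  fixes Q :: "nat \<Rightarrow> 'a::real_inner \<Rightarrow> real" and g :: "nat \<Rightarrow> 'a \<Rightarrow> 'a"
  assumes "\<And>n w. GDERIV (Q n) w :> g n w"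
  shows "GDERIV (\<lambda>w. (1 / real N) * (\<Sum>n<N. Q n w)) w :> (1 / real N) *\<^sub>R (\<Sum>n<N. g n w)"
proof -
  have "((\<lambda>w. (1 / real N) * (\<Sum>n<N. Q n w)) has_derivative (\<lambda>h. (1 / real N) * (\<Sum>n<N. inner h (g n w)))) (at w)"
    using assms unfolding gderiv_def by (intro derivative_intros) auto
  then show ?thesis unfolding gderiv_def
    by (rule has_derivative_eq_rhs) (simp add: fun_eq_iff inner_sum_right)
qed

section \<open>Local runs of one agent\<close>

(* Local SGD with per-sample gradients g, importance weights c and mini-batch distribution D;
   D_incl makes the weighted mini-batch gradient an unbiased estimate of beta times gbar. *)
locale local_sgd =
  fixes g :: "nat \<Rightarrow> 'a::real_inner \<Rightarrow> 'a" and N :: nat and c :: "nat \<Rightarrow> real"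
    and D :: "nat set pmf" and \<beta> a \<delta> \<Gamma> :: real and wo :: 'a
  assumes c_pos: "\<And>n. n < N \<Longrightarrow> c n > 0"
    and g_lipschitz: "\<And>n v u. n < N \<Longrightarrow> norm (g n v - g n u) \<le> \<delta> * norm (v - u)"
    and g_wo_le: "\<And>n. n < N \<Longrightarrow> norm (g n wo) \<le> \<Gamma>"
    and \<delta>_ge_1: "\<delta> \<ge> 1" and a_nonneg: "a \<ge> 0" and \<beta>_nonneg: "\<beta> \<ge> 0" and N_pos: "N \<ge> 1"
    and D_finite: "finite (set_pmf D)"
    and D_subset: "\<And>Bs. Bs \<in> set_pmf D \<Longrightarrow> Bs \<subseteq> {..<N}"
    and D_incl: "\<And>n. n < N \<Longrightarrow> measure_pmf.prob D {Bs. n \<in> Bs} * c n = \<beta> / N"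
begin

definition "upd v Bs = v - a *\<^sub>R (\<Sum>b\<in>Bs. c b *\<^sub>R g b v)"
definition "gbar v = (1 / real N) *\<^sub>R (\<Sum>n<N. g n v)"
definition "weight_sum = (\<Sum>n<N. c n)"
definition "drift_rate = 2 * a * weight_sum * \<delta>"

lemma weight_sum_nonneg: "weight_sum \<ge> 0"
  unfolding weight_sum_def using c_pos by (auto intro: sum_nonneg less_imp_le)

lemma drift_rate_nonneg: "drift_rate \<ge> 0"
  unfolding drift_rate_def using weight_sum_nonneg \<delta>_ge_1 a_nonneg by auto

lemma \<Gamma>_nonneg: "\<Gamma> \<ge> 0"
proof -
  have "0 < N" using N_pos by simp
  then show ?thesis using g_wo_le[of 0] norm_ge_zero[of "g 0 wo"] by linarith
qed

lemma norm_g_le: "n < N \<Longrightarrow> norm (g n v) \<le> \<delta> * (norm (v - wo) + \<Gamma>)"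
proof -
  assume n: "n < N"
  have "norm (g n v) \<le> norm (g n v - g n wo) + norm (g n wo)"
    using norm_triangle_sub[of "g n v" "g n wo"] by (simp add: add.commute)
  also have "\<dots> \<le> \<delta> * norm (v - wo) + \<Gamma>" using g_lipschitz[OF n, of v wo] g_wo_le[OF n] by linarith
  also have "\<dots> \<le> \<delta> * (norm (v - wo) + \<Gamma>)"
    using mult_right_mono[OF \<delta>_ge_1 \<Gamma>_nonneg] by (simp add: algebra_simps)
  finally show ?thesis .
qed

lemma norm_batch_sum_le:
  assumes "Bs \<subseteq> {..<N}"
  shows "norm (\<Sum>b\<in>Bs. c b *\<^sub>R g b v) \<le> weight_sum * \<delta> * (norm (v - wo) + \<Gamma>)"
proof -
  have fin: "finite Bs" using assms finite_subset by blast
  have "norm (\<Sum>b\<in>Bs. c b *\<^sub>R g b v) \<le> (\<Sum>b\<in>Bs. c b * norm (g b v))"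
    using c_pos assms by (intro norm_sum[THEN order_trans] sum_mono) (auto simp: abs_of_pos)
  also have "\<dots> \<le> (\<Sum>n<N. c n * norm (g n v))"
  proof (rule sum_mono2)
    fix b assume "b \<in> {..<N} - Bs" then have "b < N" by simp
    then show "0 \<le> c b * norm (g b v)" using c_pos[of b] by simp
  qed (use assms in auto)
  also have "\<dots> \<le> (\<Sum>n<N. c n * (\<delta> * (norm (v - wo) + \<Gamma>)))"
    using c_pos norm_g_le by (intro sum_mono mult_left_mono) (auto intro: less_imp_le)
  also have "\<dots> = weight_sum * \<delta> * (norm (v - wo) + \<Gamma>)" by (simp add: weight_sum_def sum_distrib_right mult.assoc)
  finally show ?thesis .
qed

lemma norm_gbar_le: "norm (gbar v) \<le> \<delta> * (norm (v - wo) + \<Gamma>)"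
proof -
  have "norm (gbar v) = (1 / real N) * norm (\<Sum>n<N. g n v)" by (simp add: gbar_def)
  also have "\<dots> \<le> (1 / real N) * (\<Sum>n<N. \<delta> * (norm (v - wo) + \<Gamma>))"
    by (intro mult_left_mono norm_sum[THEN order_trans] sum_mono norm_g_le) auto
  also have "\<dots> = \<delta> * (norm (v - wo) + \<Gamma>)" using N_pos by simp
  finally show ?thesis .
qed

lemma gbar_lipschitz: "norm (gbar v - gbar u) \<le> \<delta> * norm (v - u)"
proof -
  have "gbar v - gbar u = (1 / real N) *\<^sub>R (\<Sum>n<N. g n v - g n u)"
    by (simp add: gbar_def sum_subtractf scaleR_diff_right)
  then have "norm (gbar v - gbar u) = (1 / real N) * norm (\<Sum>n<N. g n v - g n u)" by simp
  also have "\<dots> \<le> (1 / real N) * (\<Sum>n<N. \<delta> * norm (v - u))"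
    by (intro mult_left_mono norm_sum[THEN order_trans] sum_mono g_lipschitz) auto
  also have "\<dots> = \<delta> * norm (v - u)" using N_pos by simp
  finally show ?thesis .
qed

lemma finite_set_pmf_run: "finite (set_pmf (local_run upd D j w))"
  by (rule finite_set_pmf_local_run[OF D_finite])

lemma local_run_drift:
  assumes drift: "real E * drift_rate \<le> 1" and j: "j \<le> E"
    and v: "v \<in> set_pmf (local_run upd D j w)"
  shows "norm (v - w) \<le> real j * drift_rate * (norm (w - wo) + \<Gamma>)"
  using j v
proof (induction j arbitrary: v)
  case (Suc j)
  from Suc.prems obtain u Bs where u: "u \<in> set_pmf (local_run upd D j w)"
    and Bs: "Bs \<in> set_pmf D" and v: "v = upd u Bs" by auto
  define m where "m = norm (w - wo) + \<Gamma>"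
  have m_nonneg: "m \<ge> 0" using \<Gamma>_nonneg m_def by simp
  have IH: "norm (u - w) \<le> real j * drift_rate * m"
    using Suc.IH[OF Suc_leD[OF Suc.prems(1)] u] unfolding m_def .
  have "real j * drift_rate \<le> real E * drift_rate"
    using Suc.prems(1) drift_rate_nonneg by (intro mult_right_mono) auto
  with drift have "real j * drift_rate * m \<le> 1 * m"
    using m_nonneg by (intro mult_right_mono) auto
  then have um: "norm (u - wo) + \<Gamma> \<le> 2 * m"
    using IH norm_triangle_ineq[of "u - w" "w - wo"] by (simp add: m_def)
  have "norm (\<Sum>b\<in>Bs. c b *\<^sub>R g b u) \<le> weight_sum * \<delta> * (norm (u - wo) + \<Gamma>)"
    by (rule norm_batch_sum_le[OF D_subset[OF Bs]])
  also have "\<dots> \<le> weight_sum * \<delta> * (2 * m)"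
    using um weight_sum_nonneg \<delta>_ge_1 by (intro mult_left_mono) auto
  finally have "a * norm (\<Sum>b\<in>Bs. c b *\<^sub>R g b u) \<le> a * (weight_sum * \<delta> * (2 * m))"
    using a_nonneg by (rule mult_left_mono)
  also have "\<dots> = drift_rate * m"
    by (simp add: drift_rate_def mult_ac)
  finally have step: "a * norm (\<Sum>b\<in>Bs. c b *\<^sub>R g b u) \<le> drift_rate * m" .
  have "norm (v - w) = norm ((u - w) - a *\<^sub>R (\<Sum>b\<in>Bs. c b *\<^sub>R g b u))"
    by (simp add: v upd_def algebra_simps)
  also have "\<dots> \<le> norm (u - w) + norm (a *\<^sub>R (\<Sum>b\<in>Bs. c b *\<^sub>R g b u))"
    by (rule norm_triangle_ineq4)
  also have "norm (a *\<^sub>R (\<Sum>b\<in>Bs. c b *\<^sub>R g b u)) = a * norm (\<Sum>b\<in>Bs. c b *\<^sub>R g b u)"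
    using a_nonneg by simp
  finally have "norm (v - w) \<le> norm (u - w) + a * norm (\<Sum>b\<in>Bs. c b *\<^sub>R g b u)" .
  with IH step show ?case
    unfolding m_def by (simp add: distrib_right)
qed simp

lemma expectation_upd_sq_le:
  assumes m: "norm (v - wo) + \<Gamma> \<le> 2 * m"
  shows "measure_pmf.expectation D (\<lambda>Bs. (norm (upd v Bs - wo))\<^sup>2)
     \<le> (norm (v - wo))\<^sup>2 - 2 * (a * \<beta>) * inner (v - wo) (gbar v) + 4 * a\<^sup>2 * weight_sum\<^sup>2 * \<delta>\<^sup>2 * m\<^sup>2"
proof -
  define F where "F Bs = (\<Sum>b\<in>Bs. c b * inner (v - wo) (g b v))" for Bs
  have pw: "(norm (upd v Bs - wo))\<^sup>2 \<le> (norm (v - wo))\<^sup>2 - 2 * a * F Bs + 4 * a\<^sup>2 * weight_sum\<^sup>2 * \<delta>\<^sup>2 * m\<^sup>2"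
    if Bs: "Bs \<in> set_pmf D" for Bs
  proof -
    define S where "S = (\<Sum>b\<in>Bs. c b *\<^sub>R g b v)"
    have e1: "upd v Bs - wo = (v - wo) - a *\<^sub>R S" by (simp add: upd_def S_def)
    have eq: "(norm (upd v Bs - wo))\<^sup>2 = (norm (v - wo))\<^sup>2 - 2 * a * inner (v - wo) S + a\<^sup>2 * (norm S)\<^sup>2"
      unfolding e1 by (rule norm_diff_scaleR_sq)
    have iS: "inner (v - wo) S = F Bs" by (simp add: S_def F_def inner_sum_right)
    have eq2: "(norm (upd v Bs - wo))\<^sup>2 = (norm (v - wo))\<^sup>2 - 2 * a * F Bs + a\<^sup>2 * (norm S)\<^sup>2"
      using eq iS by simp
    have "norm S \<le> weight_sum * \<delta> * (norm (v - wo) + \<Gamma>)"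
      unfolding S_def by (rule norm_batch_sum_le[OF D_subset[OF Bs]])
    also have "\<dots> \<le> weight_sum * \<delta> * (2 * m)" using m weight_sum_nonneg \<delta>_ge_1 by (intro mult_left_mono) auto
    finally have "norm S \<le> 2 * weight_sum * \<delta> * m" by simp
    then have "(norm S)\<^sup>2 \<le> (2 * weight_sum * \<delta> * m)\<^sup>2" by (intro power_mono) auto
    then have "a\<^sup>2 * (norm S)\<^sup>2 \<le> a\<^sup>2 * (2 * weight_sum * \<delta> * m)\<^sup>2" by (intro mult_left_mono) auto
    moreover have "a\<^sup>2 * (2 * weight_sum * \<delta> * m)\<^sup>2 = 4 * a\<^sup>2 * weight_sum\<^sup>2 * \<delta>\<^sup>2 * m\<^sup>2"
      by (simp add: power_mult_distrib)
    ultimately show ?thesis using eq2 by linarith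
  qed
  have EF: "measure_pmf.expectation D F = \<beta> * inner (v - wo) (gbar v)"
  proof -
    have "measure_pmf.expectation D F = (\<Sum>n<N. measure_pmf.prob D {X. n \<in> X} * (c n * inner (v - wo) (g n v)))"
      unfolding F_def by (rule expectation_sum_random_subset[OF D_finite D_subset])
    also have "\<dots> = (\<Sum>n<N. (\<beta> / N) * inner (v - wo) (g n v))"
      by (intro sum.cong refl) (simp only: mult.assoc[symmetric] D_incl lessThan_iff)
    also have "\<dots> = \<beta> * inner (v - wo) (gbar v)"
      by (simp add: gbar_def inner_sum_right sum_distrib_left)
    finally show ?thesis .
  qed
  have "measure_pmf.expectation D (\<lambda>Bs. (norm (upd v Bs - wo))\<^sup>2)
     \<le> measure_pmf.expectation D (\<lambda>Bs. (norm (v - wo))\<^sup>2 - 2 * a * F Bs + 4 * a\<^sup>2 * weight_sum\<^sup>2 * \<delta>\<^sup>2 * m\<^sup>2)"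
    by (rule expectation_mono_finite_pmf[OF D_finite pw])
  also have "\<dots> = (norm (v - wo))\<^sup>2 - 2 * a * measure_pmf.expectation D F + 4 * a\<^sup>2 * weight_sum\<^sup>2 * \<delta>\<^sup>2 * m\<^sup>2"
    by (simp add: Bochner_Integration.integral_add Bochner_Integration.integral_diff integrable_measure_pmf_finite[OF D_finite])
  also have "\<dots> = (norm (v - wo))\<^sup>2 - 2 * (a * \<beta>) * inner (v - wo) (gbar v) + 4 * a\<^sup>2 * weight_sum\<^sup>2 * \<delta>\<^sup>2 * m\<^sup>2"
    by (simp add: EF)
  finally show ?thesis .
qed

lemma inner_gbar_perturbation_le:
  assumes r: "norm (v - w) \<le> r" and vm: "norm (v - wo) + \<Gamma> \<le> 2 * m" and m: "m = norm (w - wo) + \<Gamma>"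
  shows "\<bar>inner (v - wo) (gbar v) - inner (w - wo) (gbar w)\<bar> \<le> 3 * r * \<delta> * m"
proof -
  have m0: "m \<ge> 0" using m \<Gamma>_nonneg by simp
  have r0: "r \<ge> 0" using r norm_ge_zero order_trans by blast
  have "inner (v - wo) (gbar v) - inner (w - wo) (gbar w) = inner (v - w) (gbar v) + inner (w - wo) (gbar v - gbar w)"
    by (simp add: inner_diff_left inner_diff_right)
  moreover have "\<bar>inner (v - w) (gbar v)\<bar> \<le> r * (\<delta> * (2 * m))"
  proof -
    have "\<bar>inner (v - w) (gbar v)\<bar> \<le> norm (v - w) * norm (gbar v)" by (rule Cauchy_Schwarz_ineq2)
    also have "\<dots> \<le> r * (\<delta> * (2 * m))"
    proof (rule mult_mono[OF r _ r0 norm_ge_zero])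
      show "norm (gbar v) \<le> \<delta> * (2 * m)"
        using order_trans[OF norm_gbar_le[of v] mult_left_mono[OF vm]] \<delta>_ge_1 by simp
    qed
    finally show ?thesis .
  qed
  moreover have "\<bar>inner (w - wo) (gbar v - gbar w)\<bar> \<le> m * (\<delta> * r)"
  proof -
    have "\<bar>inner (w - wo) (gbar v - gbar w)\<bar> \<le> norm (w - wo) * norm (gbar v - gbar w)" by (rule Cauchy_Schwarz_ineq2)
    also have "\<dots> \<le> m * (\<delta> * r)"
    proof (rule mult_mono[OF _ _ m0 norm_ge_zero])
      show "norm (w - wo) \<le> m" using m \<Gamma>_nonneg by simp
      show "norm (gbar v - gbar w) \<le> \<delta> * r"
        using order_trans[OF gbar_lipschitz[of v w] mult_left_mono[OF r]] \<delta>_ge_1 by simp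
    qed
    finally show ?thesis .
  qed
  ultimately show ?thesis by (simp add: algebra_simps)
qed

lemma local_run_mean_square_le:
  assumes drift: "real E * drift_rate \<le> 1" and j: "j \<le> E"
  shows "measure_pmf.expectation (local_run upd D j w) (\<lambda>v. (norm (v - wo))\<^sup>2)
    \<le> (norm (w - wo))\<^sup>2 - 2 * real j * a * \<beta> * inner (w - wo) (gbar w)
       + real j * a\<^sup>2 * (4 * weight_sum * \<delta>\<^sup>2 * (weight_sum + 3 * \<beta> * real E)) * (norm (w - wo) + \<Gamma>)\<^sup>2"
  using j
proof (induction j)
  case (Suc j)
  define m where "m = norm (w - wo) + \<Gamma>"
  have m_nonneg: "m \<ge> 0" using m_def \<Gamma>_nonneg by simp
  define Z where "Z = a\<^sup>2 * (4 * weight_sum * \<delta>\<^sup>2 * (weight_sum + 3 * \<beta> * real E))"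
  have step: "measure_pmf.expectation (map_pmf (upd v) D) (\<lambda>v. (norm (v - wo))\<^sup>2)
     \<le> (norm (v - wo))\<^sup>2 - 2 * a * \<beta> * inner (w - wo) (gbar w) + Z * m\<^sup>2"
    if v: "v \<in> set_pmf (local_run upd D j w)" for v
  proof -
    have "norm (v - w) \<le> real j * drift_rate * m"
      using local_run_drift[OF drift Suc_leD[OF Suc.prems] v] unfolding m_def .
    also have "\<dots> \<le> real E * drift_rate * m"
      using Suc.prems drift_rate_nonneg m_nonneg by (intro mult_right_mono) auto
    finally have r: "norm (v - w) \<le> real E * drift_rate * m" .
    have "real E * drift_rate * m \<le> m" using mult_right_mono[OF drift m_nonneg] by simp
    then have vm: "norm (v - wo) + \<Gamma> \<le> 2 * m"
      using norm_triangle_ineq[of "v - w" "w - wo"] r m_def by simp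
    have "inner (w - wo) (gbar w) - 3 * (real E * drift_rate * m) * \<delta> * m \<le> inner (v - wo) (gbar v)"
      using inner_gbar_perturbation_le[OF r vm m_def] by linarith
    from mult_left_mono[OF this, of "2 * a * \<beta>"]
    have "- 2 * a * \<beta> * inner (v - wo) (gbar v)
            \<le> - 2 * a * \<beta> * inner (w - wo) (gbar w) + 2 * a * \<beta> * (3 * (real E * drift_rate * m) * \<delta> * m)"
      using a_nonneg \<beta>_nonneg by (simp add: algebra_simps)
    moreover have "measure_pmf.expectation (map_pmf (upd v) D) (\<lambda>v. (norm (v - wo))\<^sup>2)
       \<le> (norm (v - wo))\<^sup>2 - 2 * (a * \<beta>) * inner (v - wo) (gbar v) + 4 * a\<^sup>2 * weight_sum\<^sup>2 * \<delta>\<^sup>2 * m\<^sup>2"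
      using expectation_upd_sq_le[OF vm] by simp
    ultimately show ?thesis
      unfolding Z_def drift_rate_def by (simp add: algebra_simps power2_eq_square)
  qed
  have fin: "finite (set_pmf (local_run upd D j w))" by (rule finite_set_pmf_run)
  have "measure_pmf.expectation (local_run upd D (Suc j) w) (\<lambda>v. (norm (v - wo))\<^sup>2)
     = measure_pmf.expectation (local_run upd D j w)
         (\<lambda>v. measure_pmf.expectation (map_pmf (upd v) D) (\<lambda>v. (norm (v - wo))\<^sup>2))"
    unfolding local_run.simps by (rule expectation_bind_pmf_finite[OF fin]) (simp add: D_finite)
  also have "\<dots> \<le> measure_pmf.expectation (local_run upd D j w)
                   (\<lambda>v. (norm (v - wo))\<^sup>2 - 2 * a * \<beta> * inner (w - wo) (gbar w) + Z * m\<^sup>2)"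
    by (rule expectation_mono_finite_pmf[OF fin step])
  also have "\<dots> = measure_pmf.expectation (local_run upd D j w) (\<lambda>v. (norm (v - wo))\<^sup>2)
                   - 2 * a * \<beta> * inner (w - wo) (gbar w) + Z * m\<^sup>2"
    using fin by (simp add: integrable_measure_pmf_finite)
  also have "\<dots> \<le> (norm (w - wo))\<^sup>2 - 2 * real (Suc j) * a * \<beta> * inner (w - wo) (gbar w)
                   + real (Suc j) * Z * m\<^sup>2"
    using Suc unfolding Z_def m_def by (simp add: algebra_simps)
  finally show ?case unfolding Z_def m_def by (simp add: mult.assoc)
qed simp

end

section \<open>Aggregation at the server\<close>

lemma sum_runs_mean_square_le:
  fixes R :: "nat \<Rightarrow> 'a \<Rightarrow> 'a::real_inner pmf"
  assumes fin: "\<And>k. k \<in> set ks \<Longrightarrow> finite (set_pmf (R k w))"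
  shows "measure_pmf.expectation (sum_runs R ks w) (\<lambda>s. (norm (s - real (length ks) *\<^sub>R wo))\<^sup>2)
     \<le> real (length ks) * (\<Sum>k\<leftarrow>ks. measure_pmf.expectation (R k w) (\<lambda>v. (norm (v - wo))\<^sup>2))"
  using fin
proof (induction ks)
  case (Cons k ks)
  define n where "n = real (length ks)"
  define X where "X = measure_pmf.expectation (sum_runs R ks w) (\<lambda>s. (norm (s - n *\<^sub>R wo))\<^sup>2)"
  define \<Sigma> where "\<Sigma> = (\<Sum>k\<leftarrow>ks. measure_pmf.expectation (R k w) (\<lambda>v. (norm (v - wo))\<^sup>2))"
  have IH: "X \<le> n * \<Sigma>" using Cons unfolding X_def n_def \<Sigma>_def by auto
  have fin_k: "finite (set_pmf (R k w))" using Cons.prems by simp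
  have fin_ks: "finite (set_pmf (sum_runs R ks w))"
    using Cons.prems by (intro finite_set_pmf_sum_runs) auto
  have inner: "measure_pmf.expectation (sum_runs R ks w) (\<lambda>s. (norm ((v - wo) + (s - n *\<^sub>R wo)))\<^sup>2)
                 \<le> (n + 1) * ((norm (v - wo))\<^sup>2 + \<Sigma>)" for v
  proof (cases "ks = []")
    case False
    then have n_pos: "n > 0" by (simp add: n_def)
    have "measure_pmf.expectation (sum_runs R ks w) (\<lambda>s. (norm ((v - wo) + (s - n *\<^sub>R wo)))\<^sup>2)
        \<le> measure_pmf.expectation (sum_runs R ks w)
             (\<lambda>s. (1 + n) * (norm (v - wo))\<^sup>2 + (1 + 1 / n) * (norm (s - n *\<^sub>R wo))\<^sup>2)"
      by (rule expectation_mono_finite_pmf[OF fin_ks norm_add_sq_le[OF n_pos]])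
    also have "\<dots> = (1 + n) * (norm (v - wo))\<^sup>2 + (1 + 1 / n) * X"
      using fin_ks by (simp add: X_def integrable_measure_pmf_finite)
    also have "\<dots> \<le> (1 + n) * (norm (v - wo))\<^sup>2 + (1 + 1 / n) * (n * \<Sigma>)"
      using IH n_pos by (intro add_left_mono mult_left_mono) auto
    also have "\<dots> = (n + 1) * ((norm (v - wo))\<^sup>2 + \<Sigma>)"
      using n_pos by (simp add: field_simps)
    finally show ?thesis .
  qed (simp add: n_def \<Sigma>_def)
  have "measure_pmf.expectation (sum_runs R (k # ks) w) (\<lambda>s. (norm (s - real (length (k # ks)) *\<^sub>R wo))\<^sup>2)
      = measure_pmf.expectation (R k w)
          (\<lambda>v. measure_pmf.expectation (sum_runs R ks w) (\<lambda>s. (norm ((v - wo) + (s - n *\<^sub>R wo)))\<^sup>2))"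
    using fin_k fin_ks
    by (simp only: sum_runs.simps, subst expectation_bind_pmf_finite) (auto simp: n_def algebra_simps)
  also have "\<dots> \<le> measure_pmf.expectation (R k w) (\<lambda>v. (n + 1) * ((norm (v - wo))\<^sup>2 + \<Sigma>))"
    by (rule expectation_mono_finite_pmf[OF fin_k inner])
  also have "\<dots> = real (length (k # ks))
                   * (\<Sum>k\<leftarrow>k # ks. measure_pmf.expectation (R k w) (\<lambda>v. (norm (v - wo))\<^sup>2))"
    using fin_k by (simp add: integrable_measure_pmf_finite n_def \<Sigma>_def)
  finally show ?case .
qed simp

lemma finite_set_pmf_isfedavg_step:
  assumes S_support: "\<And>A. A \<in> set_pmf S \<Longrightarrow> A \<subseteq> {..<K}"
    and R_finite: "\<And>k. k < K \<Longrightarrow> finite (set_pmf (R k w))"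
  shows "finite (set_pmf (isfedavg_step R S L w))"
proof -
  have S_finite: "finite (set_pmf S)"
    by (rule finite_subset[of _ "Pow {..<K}"]) (use S_support in auto)
  have "finite (set_pmf (sum_runs R (sorted_list_of_set A) w))" if "A \<in> set_pmf S" for A
    using S_support[OF that] finite_subset[of A "{..<K}"]
    by (intro finite_set_pmf_sum_runs R_finite) auto
  then show ?thesis
    unfolding isfedavg_step_def using S_finite by simp
qed

lemma isfedavg_step_mean_square_le:
  fixes R :: "nat \<Rightarrow> 'a \<Rightarrow> 'a::real_inner pmf"
  assumes S_support: "\<And>A. A \<in> set_pmf S \<Longrightarrow> A \<subseteq> {..<K} \<and> card A = L"
    and L_pos: "L \<ge> 1"
    and S_incl: "\<And>k. k < K \<Longrightarrow> measure_pmf.prob S {A. k \<in> A} = real L * p k"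
    and R_finite: "\<And>k. k < K \<Longrightarrow> finite (set_pmf (R k w))"
  shows "measure_pmf.expectation (isfedavg_step R S L w) (\<lambda>v. (norm (v - wo))\<^sup>2)
           \<le> (\<Sum>k<K. p k * measure_pmf.expectation (R k w) (\<lambda>v. (norm (v - wo))\<^sup>2))"
proof -
  define \<phi> where "\<phi> k = measure_pmf.expectation (R k w) (\<lambda>v. (norm (v - wo))\<^sup>2)" for k
  define avg where "avg A = map_pmf (\<lambda>s. (1 / real L) *\<^sub>R s) (sum_runs R (sorted_list_of_set A) w)" for A
  have S_finite: "finite (set_pmf S)"
    by (rule finite_subset[of _ "Pow {..<K}"]) (use S_support in auto)
  have avg_finite: "finite (set_pmf (avg A))" if "A \<in> set_pmf S" for A
  proof -
    have "set (sorted_list_of_set A) \<subseteq> {..<K}"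
      using S_support[OF that] finite_subset[of A "{..<K}"] by auto
    then show ?thesis
      unfolding avg_def set_map_pmf by (blast intro: finite_imageI finite_set_pmf_sum_runs R_finite)
  qed
  have avg_le: "measure_pmf.expectation (avg A) (\<lambda>v. (norm (v - wo))\<^sup>2) \<le> (1 / real L) * (\<Sum>k\<in>A. \<phi> k)"
    if A: "A \<in> set_pmf S" for A
  proof -
    define ks where "ks = sorted_list_of_set A"
    have A_sub: "A \<subseteq> {..<K}" and card_A: "card A = L" using S_support[OF A] by auto
    then have A_fin: "finite A" using finite_subset by blast
    then have ks: "set ks = A" "distinct ks" "length ks = L"
      using card_A by (auto simp: ks_def)
    have scale: "(norm ((1 / real L) *\<^sub>R s - wo))\<^sup>2 = (1 / real L)\<^sup>2 * (norm (s - real (length ks) *\<^sub>R wo))\<^sup>2" for s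
    proof -
      have "(1 / real L) *\<^sub>R s - wo = (1 / real L) *\<^sub>R (s - real L *\<^sub>R wo)"
        using L_pos by (simp add: algebra_simps)
      then show ?thesis by (simp add: ks(3) power_divide)
    qed
    have "measure_pmf.expectation (avg A) (\<lambda>v. (norm (v - wo))\<^sup>2)
        = (1 / real L)\<^sup>2 * measure_pmf.expectation (sum_runs R ks w) (\<lambda>s. (norm (s - real (length ks) *\<^sub>R wo))\<^sup>2)"
      by (simp add: avg_def ks_def[symmetric] scale)
    also have "\<dots> \<le> (1 / real L)\<^sup>2 * (real (length ks) * (\<Sum>k\<leftarrow>ks. \<phi> k))"
      unfolding \<phi>_def using A_sub ks(1)
      by (intro mult_left_mono sum_runs_mean_square_le) (auto intro!: R_finite)
    also have "\<dots> = (1 / real L) * (\<Sum>k\<in>A. \<phi> k)"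
      using ks L_pos by (simp add: sum_list_distinct_conv_sum_set power2_eq_square)
    finally show ?thesis .
  qed
  have "measure_pmf.expectation (isfedavg_step R S L w) (\<lambda>v. (norm (v - wo))\<^sup>2)
      = measure_pmf.expectation S (\<lambda>A. measure_pmf.expectation (avg A) (\<lambda>v. (norm (v - wo))\<^sup>2))"
    unfolding isfedavg_step_def avg_def[symmetric]
    by (rule expectation_bind_pmf_finite[OF S_finite avg_finite])
  also have "\<dots> \<le> measure_pmf.expectation S (\<lambda>A. (1 / real L) * (\<Sum>k\<in>A. \<phi> k))"
    by (rule expectation_mono_finite_pmf[OF S_finite avg_le])
  also have "\<dots> = (1 / real L) * (\<Sum>k<K. measure_pmf.prob S {A. k \<in> A} * \<phi> k)"
    using expectation_sum_random_subset[OF S_finite, of K \<phi>] S_support by auto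
  also have "\<dots> = (\<Sum>k<K. p k * \<phi> k)"
    using L_pos by (simp add: S_incl sum_distrib_left)
  finally show ?thesis unfolding \<phi>_def .
qed

section \<open>Mean-square error of ISFedAvg\<close>

locale isfedavg_setting =
  fixes K L :: nat and N E B :: "nat \<Rightarrow> nat"
    and x :: "nat \<Rightarrow> nat \<Rightarrow> 'd"
    and Q :: "nat \<Rightarrow> 'a::real_inner \<Rightarrow> 'd \<Rightarrow> real"
    and gQ :: "nat \<Rightarrow> 'a \<Rightarrow> 'd \<Rightarrow> 'a"
    and P :: "nat \<Rightarrow> 'a \<Rightarrow> real"
    and \<nu> \<delta> :: real and wo :: 'a
    and p :: "nat \<Rightarrow> real" and pn :: "nat \<Rightarrow> nat \<Rightarrow> real"
    and S :: "nat set pmf" and D :: "nat \<Rightarrow> nat set pmf"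
  assumes K_pos: "K \<ge> 1" and L_pos: "L \<ge> 1"
    and N_pos: "\<And>k. k < K \<Longrightarrow> N k \<ge> 1"
    and E_pos: "\<And>k. k < K \<Longrightarrow> E k \<ge> 1"
    and B_pos: "\<And>k. k < K \<Longrightarrow> B k \<ge> 1"
    and grad: "\<And>k w z. GDERIV (\<lambda>v. Q k v z) w :> gQ k w z"
    and P_def: "\<And>k w. P k w = (1 / real (N k)) * (\<Sum>n<N k. Q k w (x k n))"
    and nu_pos: "\<nu> > 0"
    and P_strong: "\<And>k. k < K \<Longrightarrow> strongly_convex \<nu> (P k)"
    and Q_lip: "\<And>k n w v. k < K \<Longrightarrow> n < N k \<Longrightarrow>
                   norm (gQ k w (x k n) - gQ k v (x k n)) \<le> \<delta> * norm (w - v)"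
    and wo_min: "\<And>w. (1 / real K) * (\<Sum>k<K. P k wo) \<le> (1 / real K) * (\<Sum>k<K. P k w)"
    and p_pos: "\<And>k. k < K \<Longrightarrow> p k > 0"
    and p_sum: "(\<Sum>k<K. p k) = 1"
    and S_support: "\<And>A. A \<in> set_pmf S \<Longrightarrow> A \<subseteq> {..<K} \<and> card A = L"
    and S_incl: "\<And>k. k < K \<Longrightarrow> measure_pmf.prob S {A. k \<in> A} = real L * p k"
    and pn_pos: "\<And>k n. k < K \<Longrightarrow> n < N k \<Longrightarrow> pn k n > 0"
    and D_support: "\<And>k Bs. k < K \<Longrightarrow> Bs \<in> set_pmf (D k) \<Longrightarrow> Bs \<subseteq> {..<N k} \<and> card Bs = B k"
    and D_incl: "\<And>k n. k < K \<Longrightarrow> n < N k \<Longrightarrow>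
                   measure_pmf.prob (D k) {Bs. n \<in> Bs} = real (B k) * pn k n"
begin

definition "gP k w = (1 / real (N k)) *\<^sub>R (\<Sum>n<N k. gQ k w (x k n))"

definition "\<Gamma> = (\<Sum>k<K. \<Sum>n<N k. norm (gQ k wo (x k n)))"

(* At least 1, so that it also absorbs Gamma in local_sgd.norm_g_le. *)
definition "lip = max \<delta> 1"

definition "weight k n = 1 / (real (N k) * pn k n)"

definition "step_factor k = 1 / (real K * p k * real (E k) * real (B k))"

definition "weight_total k = (\<Sum>n<N k. weight k n)"

definition "drift_factor k = 2 * real (E k) * step_factor k * weight_total k * lip"

definition "noise_factor k = real (E k) * (step_factor k)\<^sup>2
   * (4 * weight_total k * lip\<^sup>2 * (weight_total k + 3 * real (B k) * real (E k)))"

(* The summand 1 keeps Y positive, so that mu0 below is positive. *)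
definition "Y = (\<Sum>k<K. p k * noise_factor k) + 1"

definition "rate \<mu> = 1 - 2 * \<nu> * \<mu> + 2 * Y * \<mu>\<^sup>2"

definition "\<mu>0 = min (1 / (1 + (\<Sum>k<K. drift_factor k))) (min (1 / (2 * \<nu>)) (\<nu> / (2 * Y)))"

definition "sigma_s = 1 / (real K)\<^sup>2 * (\<Sum>k<K. (1 / p k) *
   (6 / (real (E k) * real (B k) * (real (N k))\<^sup>2) * (\<Sum>n<N k. (1 / pn k n) * (norm (gQ k wo (x k n)))\<^sup>2)
    + (3 + 6 / (real (E k) * real (B k))) * (norm (gP k wo))\<^sup>2))"

lemma weight_total_nonneg: "k < K \<Longrightarrow> weight_total k \<ge> 0"
  unfolding weight_total_def weight_def using N_pos pn_pos
  by (intro sum_nonneg) (simp add: less_imp_le)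

lemma step_factor_pos: "k < K \<Longrightarrow> step_factor k > 0"
  unfolding step_factor_def using K_pos p_pos E_pos B_pos
  by (simp add: less_le_trans[OF zero_less_one])

lemma drift_factor_nonneg: "k < K \<Longrightarrow> drift_factor k \<ge> 0"
  unfolding drift_factor_def lip_def using weight_total_nonneg step_factor_pos
  by (simp add: less_imp_le)

lemma Y_ge_1: "Y \<ge> 1"
proof -
  have "noise_factor k \<ge> 0" if "k < K" for k
    unfolding noise_factor_def using weight_total_nonneg[OF that] by simp
  then have "(\<Sum>k<K. p k * noise_factor k) \<ge> 0"
    using p_pos by (intro sum_nonneg) (simp add: less_imp_le)
  then show ?thesis unfolding Y_def by simp
qed

lemma \<mu>0_pos: "\<mu>0 > 0"
proof -
  have "(\<Sum>k<K. drift_factor k) \<ge> 0" using drift_factor_nonneg by (intro sum_nonneg) simp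
  then show ?thesis unfolding \<mu>0_def using nu_pos Y_ge_1 by simp
qed

lemma finite_set_pmf_D: "k < K \<Longrightarrow> finite (set_pmf (D k))"
  by (rule finite_subset[of _ "Pow {..<N k}"]) (use D_support in auto)

lemma local_sgd_agent:
  assumes k: "k < K" and \<mu>: "\<mu> \<ge> 0"
  shows "local_sgd (\<lambda>n v. gQ k v (x k n)) (N k) (weight k) (D k) (real (B k)) (\<mu> * step_factor k) lip \<Gamma> wo"
proof unfold_locales
  fix n assume n: "n < N k"
  show "weight k n > 0" using N_pos[OF k] pn_pos[OF k n] by (simp add: weight_def)
  show "norm (gQ k v (x k n) - gQ k u (x k n)) \<le> lip * norm (v - u)" for v u
    using Q_lip[OF k n, of v u] mult_right_mono[of \<delta> lip "norm (v - u)"] by (simp add: lip_def)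
  have "norm (gQ k wo (x k n)) \<le> (\<Sum>n<N k. norm (gQ k wo (x k n)))"
    using n by (intro member_le_sum) auto
  also have "\<dots> \<le> \<Gamma>"
    unfolding \<Gamma>_def using k
    by (intro member_le_sum[where f = "\<lambda>k. \<Sum>n<N k. norm (gQ k wo (x k n))"]) (auto intro: sum_nonneg)
  finally show "norm (gQ k wo (x k n)) \<le> \<Gamma>" .
  show "measure_pmf.prob (D k) {Bs. n \<in> Bs} * weight k n = real (B k) / real (N k)"
    using D_incl[OF k n] pn_pos[OF k n] by (simp add: weight_def)
qed (use k \<mu> N_pos D_support finite_set_pmf_D step_factor_pos[OF k] in \<open>auto simp: lip_def\<close>)

lemma local_mean_square_le:
  assumes k: "k < K" and \<mu>: "\<mu> \<ge> 0" "\<mu> * drift_factor k \<le> 1"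
  shows "measure_pmf.expectation (isfedavg_local K p E B N pn gQ x \<mu> D k w) (\<lambda>v. (norm (v - wo))\<^sup>2)
    \<le> (norm (w - wo))\<^sup>2 - 2 * (\<mu> / (real K * p k)) * inner (w - wo) (gP k w)
       + \<mu>\<^sup>2 * noise_factor k * (norm (w - wo) + \<Gamma>)\<^sup>2"
proof -
  interpret agent: local_sgd "\<lambda>n v. gQ k v (x k n)" "N k" "weight k" "D k" "real (B k)"
      "\<mu> * step_factor k" lip \<Gamma> wo
    by (rule local_sgd_agent[OF k \<mu>(1)])
  have "agent.upd = (\<lambda>v Bs. v - (\<mu> / (real K * p k * real (E k) * real (B k))) *\<^sub>R
                   (\<Sum>b\<in>Bs. (1 / (real (N k) * pn k b)) *\<^sub>R gQ k v (x k b)))"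
    by (intro ext, unfold agent.upd_def) (simp add: weight_def step_factor_def)
  then have local_run: "isfedavg_local K p E B N pn gQ x \<mu> D k w = local_run agent.upd (D k) (E k) w"
    by (simp add: isfedavg_local_def)
  have drift: "real (E k) * agent.drift_rate \<le> 1"
    using \<mu>(2) by (simp add: agent.drift_rate_def agent.weight_sum_def drift_factor_def weight_total_def mult_ac)
  have "2 * real (E k) * (\<mu> * step_factor k) * real (B k) * inner (w - wo) (agent.gbar w)
      = 2 * (\<mu> / (real K * p k)) * inner (w - wo) (gP k w)"
    using E_pos[OF k] B_pos[OF k] by (simp add: step_factor_def agent.gbar_def gP_def)
  moreover have "real (E k) * (\<mu> * step_factor k)\<^sup>2
      * (4 * agent.weight_sum * lip\<^sup>2 * (agent.weight_sum + 3 * real (B k) * real (E k)))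
      = \<mu>\<^sup>2 * noise_factor k"
    by (simp add: noise_factor_def agent.weight_sum_def weight_total_def power_mult_distrib)
  ultimately show ?thesis
    using agent.local_run_mean_square_le[OF drift order_refl, of w]
    unfolding local_run by (simp add: mult_ac)
qed

lemma gderiv_P: "GDERIV (P k) w :> gP k w"
proof -
  have "P k = (\<lambda>w. (1 / real (N k)) * (\<Sum>n<N k. Q k w (x k n)))"
    using P_def by (simp add: fun_eq_iff)
  moreover have "GDERIV (\<lambda>w. (1 / real (N k)) * (\<Sum>n<N k. Q k w (x k n))) w :> gP k w"
    unfolding gP_def by (rule gderiv_average) (rule grad)
  ultimately show ?thesis by simp
qed

lemma sum_gP_wo_eq_0: "(\<Sum>k<K. gP k wo) = 0"
proof (rule gderiv_eq_0_at_minimum)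
  have "((\<lambda>w. \<Sum>k<K. P k w) has_derivative (\<lambda>h. \<Sum>k<K. inner h (gP k wo))) (at wo)"
    by (rule has_derivative_sum) (use gderiv_P in \<open>simp add: gderiv_def\<close>)
  then show "GDERIV (\<lambda>w. \<Sum>k<K. P k w) wo :> (\<Sum>k<K. gP k wo)"
    unfolding gderiv_def by (rule has_derivative_eq_rhs) (simp add: fun_eq_iff inner_sum_right)
  show "(\<Sum>k<K. P k wo) \<le> (\<Sum>k<K. P k v)" for v
    using wo_min[of v] K_pos by (simp add: divide_le_cancel)
qed

lemma sum_inner_gP_ge: "real K * \<nu> * (norm (w - wo))\<^sup>2 \<le> (\<Sum>k<K. inner (w - wo) (gP k w))"
proof -
  have "(\<Sum>k<K. \<nu> * (norm (w - wo))\<^sup>2) \<le> (\<Sum>k<K. inner (w - wo) (gP k w - gP k wo))"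
    by (rule sum_mono) (use strongly_convex_gradient_monotone[OF P_strong gderiv_P gderiv_P] in auto)
  also have "\<dots> = (\<Sum>k<K. inner (w - wo) (gP k w)) - inner (w - wo) (\<Sum>k<K. gP k wo)"
    by (simp add: inner_diff_right sum_subtractf inner_sum_right)
  finally show ?thesis by (simp add: sum_gP_wo_eq_0)
qed

lemma drift_factor_le:
  assumes k: "k < K" and \<mu>: "0 < \<mu>" "\<mu> < \<mu>0"
  shows "\<mu> * drift_factor k \<le> 1"
proof -
  have "drift_factor k \<le> (\<Sum>k<K. drift_factor k)"
    using k drift_factor_nonneg by (intro member_le_sum) auto
  then have "\<mu> * drift_factor k \<le> \<mu> * (1 + (\<Sum>k<K. drift_factor k))"
    using \<mu> by (intro mult_left_mono) auto
  also have "\<dots> < 1"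
    using \<mu> drift_factor_nonneg sum_nonneg[of "{..<K}" drift_factor]
    by (simp add: \<mu>0_def pos_less_divide_eq)
  finally show ?thesis by simp
qed

lemma isfedavg_step_contraction:
  assumes \<mu>: "0 < \<mu>" "\<mu> < \<mu>0"
  shows "measure_pmf.expectation (isfedavg_step (isfedavg_local K p E B N pn gQ x \<mu> D) S L w)
           (\<lambda>v. (norm (v - wo))\<^sup>2)
         \<le> rate \<mu> * (norm (w - wo))\<^sup>2 + 2 * Y * \<mu>\<^sup>2 * \<Gamma>\<^sup>2"
proof -
  define r where "r = norm (w - wo)"
  define I where "I k = inner (w - wo) (gP k w)" for k
  have "measure_pmf.expectation (isfedavg_step (isfedavg_local K p E B N pn gQ x \<mu> D) S L w)
          (\<lambda>v. (norm (v - wo))\<^sup>2)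
        \<le> (\<Sum>k<K. p k * measure_pmf.expectation (isfedavg_local K p E B N pn gQ x \<mu> D k w)
                                 (\<lambda>v. (norm (v - wo))\<^sup>2))"
    using S_support L_pos S_incl
    by (intro isfedavg_step_mean_square_le)
       (auto simp: isfedavg_local_def intro: finite_set_pmf_local_run finite_set_pmf_D)
  also have "\<dots> \<le> (\<Sum>k<K. p k * (r\<^sup>2 - 2 * (\<mu> / (real K * p k)) * I k + \<mu>\<^sup>2 * noise_factor k * (r + \<Gamma>)\<^sup>2))"
    unfolding r_def I_def
    by (intro sum_mono mult_left_mono local_mean_square_le drift_factor_le) (use \<mu> p_pos in \<open>auto intro: less_imp_le\<close>)
  also have "\<dots> = r\<^sup>2 - 2 * (\<mu> / real K) * (\<Sum>k<K. I k) + \<mu>\<^sup>2 * (\<Sum>k<K. p k * noise_factor k) * (r + \<Gamma>)\<^sup>2"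
  proof -
    have "p k * (r\<^sup>2 - 2 * (\<mu> / (real K * p k)) * I k + \<mu>\<^sup>2 * noise_factor k * (r + \<Gamma>)\<^sup>2)
        = p k * r\<^sup>2 - 2 * (\<mu> / real K) * I k + \<mu>\<^sup>2 * (p k * noise_factor k) * (r + \<Gamma>)\<^sup>2"
      if "k \<in> {..<K}" for k
      using p_pos[of k] that by (simp add: field_simps)
    then have "(\<Sum>k<K. p k * (r\<^sup>2 - 2 * (\<mu> / (real K * p k)) * I k + \<mu>\<^sup>2 * noise_factor k * (r + \<Gamma>)\<^sup>2))
        = (\<Sum>k<K. p k) * r\<^sup>2 - 2 * (\<mu> / real K) * (\<Sum>k<K. I k)
          + \<mu>\<^sup>2 * (\<Sum>k<K. p k * noise_factor k) * (r + \<Gamma>)\<^sup>2"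
      by (simp add: sum.distrib sum_subtractf sum_distrib_left sum_distrib_right)
    then show ?thesis by (simp add: p_sum)
  qed
  also have "\<dots> \<le> r\<^sup>2 - 2 * \<nu> * \<mu> * r\<^sup>2 + \<mu>\<^sup>2 * Y * (2 * r\<^sup>2 + 2 * \<Gamma>\<^sup>2)"
  proof -
    have "2 * \<nu> * \<mu> * r\<^sup>2 \<le> 2 * (\<mu> / real K) * (\<Sum>k<K. I k)"
      using mult_left_mono[OF sum_inner_gP_ge[of w], of "2 * (\<mu> / real K)"] \<mu> K_pos
      by (simp add: r_def I_def mult_ac)
    moreover have "(\<Sum>k<K. p k * noise_factor k) \<le> Y" by (simp add: Y_def)
    moreover have "(r + \<Gamma>)\<^sup>2 \<le> 2 * r\<^sup>2 + 2 * \<Gamma>\<^sup>2"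
      using zero_le_power2[of "r - \<Gamma>"] by (simp add: power2_eq_square algebra_simps)
    ultimately have "\<mu>\<^sup>2 * (\<Sum>k<K. p k * noise_factor k) * (r + \<Gamma>)\<^sup>2 \<le> \<mu>\<^sup>2 * Y * (2 * r\<^sup>2 + 2 * \<Gamma>\<^sup>2)"
      using Y_ge_1 by (intro mult_mono mult_left_mono) auto
    with \<open>2 * \<nu> * \<mu> * r\<^sup>2 \<le> _\<close> show ?thesis by linarith
  qed
  also have "\<dots> = rate \<mu> * r\<^sup>2 + 2 * Y * \<mu>\<^sup>2 * \<Gamma>\<^sup>2"
    by (simp add: rate_def algebra_simps)
  finally show ?thesis unfolding r_def .
qed

lemma isfedavg_mean_square_error_le:
  assumes \<mu>: "0 < \<mu>" "\<mu> < \<mu>0"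
  shows "0 \<le> rate \<mu>" and "rate \<mu> < 1"
    and "measure_pmf.expectation (isfedavg K L p S E B N pn D gQ x \<mu> w0 i) (\<lambda>w. (norm (wo - w))\<^sup>2)
           \<le> (norm (wo - w0))\<^sup>2 * rate \<mu> ^ i + 2 * Y * \<Gamma>\<^sup>2 / \<nu> * \<mu>"
proof -
  have "\<mu> < 1 / (2 * \<nu>)" and "\<mu> < \<nu> / (2 * Y)"
    using \<mu>(2) by (simp_all add: \<mu>0_def)
  then have "2 * \<nu> * \<mu> < 1" and "2 * Y * \<mu> < \<nu>"
    using nu_pos Y_ge_1 by (simp_all add: pos_less_divide_eq mult.commute)
  then have gap: "\<nu> * \<mu> \<le> 1 - rate \<mu>"
    using \<mu> by (simp add: rate_def power2_eq_square)
  show rate_nonneg: "0 \<le> rate \<mu>"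
    using \<open>2 * \<nu> * \<mu> < 1\<close> Y_ge_1 by (simp add: rate_def)
  show "rate \<mu> < 1"
    using gap \<mu> nu_pos by (smt (verit) mult_pos_pos)
  have "measure_pmf.expectation (isfedavg K L p S E B N pn D gQ x \<mu> w0 i) (\<lambda>w. (norm (w - wo))\<^sup>2)
          \<le> rate \<mu> ^ i * (norm (w0 - wo))\<^sup>2 + 2 * Y * \<mu>\<^sup>2 * \<Gamma>\<^sup>2 / (1 - rate \<mu>)"
    unfolding isfedavg_def
  proof (rule expectation_iterate_pmf_le[OF _ isfedavg_step_contraction[OF \<mu>] rate_nonneg \<open>rate \<mu> < 1\<close>])
    show "finite (set_pmf (isfedavg_step (isfedavg_local K p E B N pn gQ x \<mu> D) S L w))" for w
      using S_support
      by (intro finite_set_pmf_isfedavg_step)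
         (auto simp: isfedavg_local_def intro: finite_set_pmf_local_run finite_set_pmf_D)
  qed (use Y_ge_1 in simp)
  also have "2 * Y * \<mu>\<^sup>2 * \<Gamma>\<^sup>2 / (1 - rate \<mu>) \<le> 2 * Y * \<mu>\<^sup>2 * \<Gamma>\<^sup>2 / (\<nu> * \<mu>)"
    using gap \<mu> nu_pos Y_ge_1 \<open>rate \<mu> < 1\<close> by (intro divide_left_mono mult_pos_pos) auto
  also have "\<dots> = 2 * Y * \<Gamma>\<^sup>2 / \<nu> * \<mu>"
    using \<mu> nu_pos by (simp add: power2_eq_square field_simps)
  finally show "measure_pmf.expectation (isfedavg K L p S E B N pn D gQ x \<mu> w0 i) (\<lambda>w. (norm (wo - w))\<^sup>2)
           \<le> (norm (wo - w0))\<^sup>2 * rate \<mu> ^ i + 2 * Y * \<Gamma>\<^sup>2 / \<nu> * \<mu>"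
    by (simp add: norm_minus_commute mult.commute)
qed

lemma sigma_s_nonneg: "sigma_s \<ge> 0"
  unfolding sigma_s_def using p_pos pn_pos
  by (intro mult_nonneg_nonneg sum_nonneg add_nonneg_nonneg) (auto simp: less_imp_le)

lemma \<Gamma>_eq_0_if_sigma_s_eq_0:
  assumes "sigma_s = 0"
  shows "\<Gamma> = 0"
proof -
  define gsq where "gsq k = (\<Sum>n<N k. (1 / pn k n) * (norm (gQ k wo (x k n)))\<^sup>2)" for k
  define summand where "summand k = (1 / p k) * (6 / (real (E k) * real (B k) * (real (N k))\<^sup>2) * gsq k
      + (3 + 6 / (real (E k) * real (B k))) * (norm (gP k wo))\<^sup>2)" for k
  have gsq_nonneg: "gsq k \<ge> 0" if "k < K" for k
    unfolding gsq_def using pn_pos that by (intro sum_nonneg) (simp add: less_imp_le)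
  have summand_nonneg: "summand k \<ge> 0" if "k < K" for k
    unfolding summand_def using p_pos[OF that] gsq_nonneg[OF that] by (simp add: less_imp_le)
  have "(\<Sum>k<K. summand k) = 0"
    using assms K_pos by (simp add: sigma_s_def summand_def gsq_def)
  then have summand_0: "summand k = 0" if "k < K" for k
    using sum_nonneg_eq_0_iff[of "{..<K}" summand] summand_nonneg that by auto
  have "gsq k = 0" if k: "k < K" for k
  proof -
    have c_pos: "6 / (real (E k) * real (B k) * (real (N k))\<^sup>2) > 0"
      using E_pos[OF k] B_pos[OF k] N_pos[OF k] by simp
    have "6 / (real (E k) * real (B k) * (real (N k))\<^sup>2) * gsq k
          + (3 + 6 / (real (E k) * real (B k))) * (norm (gP k wo))\<^sup>2 = 0"
      using summand_0[OF k] p_pos[OF k] by (simp add: summand_def)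
    moreover have "(3 + 6 / (real (E k) * real (B k))) * (norm (gP k wo))\<^sup>2 \<ge> 0" by simp
    moreover have "6 / (real (E k) * real (B k) * (real (N k))\<^sup>2) * gsq k \<ge> 0"
      using c_pos gsq_nonneg[OF k] by simp
    ultimately have "6 / (real (E k) * real (B k) * (real (N k))\<^sup>2) * gsq k = 0" by linarith
    then show ?thesis using E_pos[OF k] B_pos[OF k] N_pos[OF k] by simp
  qed
  then have "norm (gQ k wo (x k n)) = 0" if "k < K" "n < N k" for k n
    using sum_nonneg_eq_0_iff[of "{..<N k}" "\<lambda>n. (1 / pn k n) * (norm (gQ k wo (x k n)))\<^sup>2"]
      that pn_pos[of k]
    by (fastforce simp: gsq_def less_imp_le)
  then show ?thesis
    unfolding \<Gamma>_def by simp
qed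


lemma neighbourhood_multiple_sigma_s: "\<exists>C. 2 * Y * \<Gamma>\<^sup>2 / \<nu> = C * (sigma_s + \<xi>\<^sup>2)"
proof (cases "sigma_s + \<xi>\<^sup>2 = 0")
  case True
  then have "sigma_s = 0"
    using sigma_s_nonneg zero_le_power2[of \<xi>] by linarith
  then show ?thesis by (simp add: \<Gamma>_eq_0_if_sigma_s_eq_0)
next
  case False
  then show ?thesis by (intro exI[of _ "2 * Y * \<Gamma>\<^sup>2 / \<nu> / (sigma_s + \<xi>\<^sup>2)"]) simp
qed
end

theorem theorem1:
  fixes K L :: nat and N E B :: "nat \<Rightarrow> nat"
    and x :: "nat \<Rightarrow> nat \<Rightarrow> 'd"
    and Q :: "nat \<Rightarrow> 'a::euclidean_space \<Rightarrow> 'd \<Rightarrow> real"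
    and gQ :: "nat \<Rightarrow> 'a \<Rightarrow> 'd \<Rightarrow> 'a"
    and P :: "nat \<Rightarrow> 'a \<Rightarrow> real"
    and \<nu> \<delta> \<xi> :: real
    and wo w0 :: 'a and wko :: "nat \<Rightarrow> 'a"
    and p :: "nat \<Rightarrow> real" and pn :: "nat \<Rightarrow> nat \<Rightarrow> real"
    and S :: "nat set pmf" and D :: "nat \<Rightarrow> nat set pmf"
  assumes K_pos: "K \<ge> 1"
    and L_range: "1 \<le> L" "L \<le> K"
    and N_pos: "\<And>k. k < K \<Longrightarrow> N k \<ge> 1"
    and E_pos: "\<And>k. k < K \<Longrightarrow> E k \<ge> 1"
    and B_range: "\<And>k. k < K \<Longrightarrow> 1 \<le> B k \<and> B k \<le> N k"
    and grad: "\<And>k w z. GDERIV (\<lambda>v. Q k v z) w :> gQ k w z"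
    and P_def: "\<And>k w. P k w = (1 / real (N k)) * (\<Sum>n<N k. Q k w (x k n))"
    (* Assumption A *)
    and nu_pos: "\<nu> > 0"
    and P_strong: "\<And>k. k < K \<Longrightarrow> strongly_convex \<nu> (P k)"
    and Q_convex: "\<And>k n. k < K \<Longrightarrow> n < N k \<Longrightarrow> convex_on UNIV (\<lambda>w. Q k w (x k n))"
    and Q_lip: "\<And>k n w v. k < K \<Longrightarrow> n < N k \<Longrightarrow>
                   norm (gQ k w (x k n) - gQ k v (x k n)) \<le> \<delta> * norm (w - v)"
    (* minimizers *)
    and wo_min: "\<And>w. (1 / real K) * (\<Sum>k<K. P k wo) \<le> (1 / real K) * (\<Sum>k<K. P k w)"
    and wko_min: "\<And>k w. k < K \<Longrightarrow> P k (wko k) \<le> P k w"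
    (* Assumption B *)
    and model_drift: "\<And>k. k < K \<Longrightarrow> norm (wko k - wo) \<le> \<xi>"
    (* agent sampling: L distinct agents, inclusion probabilities L p_k *)
    and p_pos: "\<And>k. k < K \<Longrightarrow> p k > 0"
    and p_sum: "(\<Sum>k<K. p k) = 1"
    and S_support: "\<And>A. A \<in> set_pmf S \<Longrightarrow> A \<subseteq> {..<K} \<and> card A = L"
    and S_incl: "\<And>k. k < K \<Longrightarrow> measure_pmf.prob S {A. k \<in> A} = real L * p k"
    (* data sampling: B_k distinct points, inclusion probabilities B_k p_n^(k) *)
    and pn_pos: "\<And>k n. k < K \<Longrightarrow> n < N k \<Longrightarrow> pn k n > 0"
    and pn_sum: "\<And>k. k < K \<Longrightarrow> (\<Sum>n<N k. pn k n) = 1"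
    and D_support: "\<And>k Bs. k < K \<Longrightarrow> Bs \<in> set_pmf (D k) \<Longrightarrow> Bs \<subseteq> {..<N k} \<and> card Bs = B k"
    and D_incl: "\<And>k n. k < K \<Longrightarrow> n < N k \<Longrightarrow>
                   measure_pmf.prob (D k) {Bs. n \<in> Bs} = real (B k) * pn k n"
  shows "\<exists>\<mu>0 > 0. \<exists>c > 0. \<exists>d \<ge> 0. \<exists>C0 C1 C2.
           \<forall>\<mu>. 0 < \<mu> \<and> \<mu> < \<mu>0 \<longrightarrow>
             (let lam' = 1 - c * \<mu> + d * \<mu>\<^sup>2;
                  gP = (\<lambda>k w. (1 / real (N k)) *\<^sub>R (\<Sum>n<N k. gQ k w (x k n)));
                  \<sigma>sk = (\<lambda>k. 6 / (real (E k) * real (B k) * (real (N k))\<^sup>2) *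
                          (\<Sum>n<N k. (1 / pn k n) * (norm (gQ k wo (x k n)))\<^sup>2));
                  \<sigma>s = 1 / (real K)\<^sup>2 * (\<Sum>k<K. (1 / p k) *
                          (\<sigma>sk k + (3 + 6 / (real (E k) * real (B k))) * (norm (gP k wo))\<^sup>2));
                  \<sigma>qk = (\<lambda>k. 3 / (real (B k) * (real (N k))\<^sup>2) *
                          (\<Sum>n<N k. (1 / pn k n) * (norm (gQ k (wko k) (x k n)))\<^sup>2))
              in 0 \<le> lam' \<and> lam' < 1 \<and>
                 (\<forall>i. measure_pmf.expectation (isfedavg K L p S E B N pn D gQ x \<mu> w0 i)
                          (\<lambda>w. (norm (wo - w))\<^sup>2)
                       \<le> C0 * lam' ^ i + C1 * \<mu> * (\<sigma>s + \<xi>\<^sup>2)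
                          + C2 * \<mu>\<^sup>2 * ((1 / real K) * (\<Sum>k<K. \<sigma>qk k))))"
proof -
  interpret isfedavg_setting K L N E B x Q gQ P \<nu> \<delta> wo p pn S D
    using assms by unfold_locales auto
  obtain C1 where C1: "2 * Y * \<Gamma>\<^sup>2 / \<nu> = C1 * (sigma_s + \<xi>\<^sup>2)"
    using neighbourhood_multiple_sigma_s by blast
  have error_le: "measure_pmf.expectation (isfedavg K L p S E B N pn D gQ x \<mu> w0 i) (\<lambda>w. (norm (wo - w))\<^sup>2)
      \<le> (norm (wo - w0))\<^sup>2 * rate \<mu> ^ i + C1 * \<mu> * (sigma_s + \<xi>\<^sup>2) + 0 * \<mu>\<^sup>2 * z"
    if "0 < \<mu>" "\<mu> < \<mu>0" for \<mu> i z
  proof -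
    have "2 * Y * \<Gamma>\<^sup>2 / \<nu> * \<mu> = C1 * \<mu> * (sigma_s + \<xi>\<^sup>2)"
      by (subst C1) (simp add: mult_ac)
    then show ?thesis using isfedavg_mean_square_error_le(3)[OF that] by simp
  qed
  have c_pos: "2 * \<nu> > 0" and d_nonneg: "2 * Y \<ge> 0"
    using nu_pos Y_ge_1 by auto
  show ?thesis
    unfolding Let_def
  proof (rule exI[of _ \<mu>0], rule conjI[OF \<mu>0_pos], rule exI[of _ "2 * \<nu>"], rule conjI[OF c_pos],
      rule exI[of _ "2 * Y"], rule conjI[OF d_nonneg],
      rule exI[of _ "(norm (wo - w0))\<^sup>2"], rule exI[of _ C1], rule exI[of _ 0], intro allI impI conjI)
  qed (elim conjE, rule isfedavg_mean_square_error_le(1,2)[unfolded rate_def]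
      error_le[unfolded sigma_s_def gP_def rate_def], assumption+)+
qed

end
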